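(* Let $G_1$ be an $r_1$-regular graph with $r_1\ge 1$ on $n_1$ vertices and $m_1$ edges, and let $G_2$ be an $r_2$-regular graph with $r_2\ge1$ on $n_2$ vertices. Let $0=\mu_1,\mu_2,\ldots,\mu_{n_1}$ be the normalized Laplacian eigenvalues of $G_1$ and $0=\nu_1,\nu_2,\ldots,\nu_{n_2}$ those of $G_2$ (listed with multiplicity). Then the normalized Laplacian spectrum (as a multiset) of the subdivision-edge join $G_1\veebar G_2$ consists of: (i) $0$; (ii) $1$, with multiplicity $m_1-n_1$; (iii) $\dfrac{m_1+r_2\nu_i}{r_2+m_1}$ for $i=2,\ldots,n_2$; (iv) for each $i=2,\ldots,n_1$, the two roots of $(x-1)^2-\dfrac{2-\mu_i}{2+n_2}=0$; (v) the two roots of $x^2-\left(2+\dfrac{m_1}{r_2+m_1}\right)x+\dfrac{2m_1}{r_2+m_1}+\dfrac{n_2r_2}{(2+n_2)(r_2+m_1)}=0$. (If $m_1<n_1$, which can only happen when $r_1=1$, item (ii) means that $n_1-m_1$ copies of $1$ are removed from the multiset formed by items (i), (iii), (iv), (v).) Equivalently, the characteristic polynomial of $\mathcal{L}(G_1\veebar G_2)$ equals $$x(x-1)^{m_1-n_1}\left(x^2-\left(2+\tfrac{m_1}{r_2+m_1}\right)x+\tfrac{2m_1}{r_2+m_1}+\tfrac{n_2r_2}{(2+n_2)(r_2+m_1)}\right)\prod_{i=2}^{n_1}\left((x-1)^2-\tfrac{2-\mu_i}{2+n_2}\right)\prod_{i=2}^{n_2}\left(x-\tfrac{m_1+r_2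\nu_i}{r_2+m_1}\right).$$
   Context: All graphs are finite and simple. For a graph $G$ without isolated vertices, with adjacency matrix $A(G)$ and diagonal degree matrix $D(G)$, the normalized Laplacian matrix is $\mathcal{L}(G)=I-D(G)^{-1/2}A(G)D(G)^{-1/2}$; its eigenvalues (with multiplicity) form the normalized Laplacian spectrum of $G$. The subdivision graph $S(G)$ of $G$ is obtained by inserting a new vertex into every edge of $G$; the set of these new vertices is denoted $I(G)$. The subdivision-edge join $G_1\veebar G_2$ of graphs $G_1,G_2$ is the graph obtained from $S(G_1)$ and (a disjoint copy of) $G_2$ by joining each vertex of $I(G_1)$ with every vertex of $V(G_2)$. *)

theory Defs
  imports "Jordan_Normal_Form.Char_Poly"
begin

definition simple_graph :: "'a set \<Rightarrow> 'a set set \<Rightarrow> bool" where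
  "simple_graph V E \<longleftrightarrow> finite V \<and> (\<forall>e\<in>E. \<exists>u v. e = {u, v} \<and> u \<noteq> v \<and> u \<in> V \<and> v \<in> V)"

definition degree :: "'a set set \<Rightarrow> 'a \<Rightarrow> nat" where
  "degree E v = card {e \<in> E. v \<in> e}"

definition regular :: "'a set \<Rightarrow> 'a set set \<Rightarrow> nat \<Rightarrow> bool" where
  "regular V E r \<longleftrightarrow> (\<forall>v\<in>V. degree E v = r)"

text \<open>Entry (u,v) of the normalized Laplacian I - D^(-1/2) A D^(-1/2) (simple graph, so A has zero diagonal).\<close>
definition nlap_entry :: "'a set set \<Rightarrow> 'a \<Rightarrow> 'a \<Rightarrow> real" where
  "nlap_entry E u v =
     (if u = v then 1 else 0)
     - (if {u, v} \<in> E then 1 / sqrt (real (degree E u) * real (degree E v)) else 0)"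

text \<open>An (arbitrary, fixed) enumeration of the vertex set; the characteristic polynomial does not depend on it.\<close>
definition vertex_enum :: "'a set \<Rightarrow> nat \<Rightarrow> 'a" where
  "vertex_enum V = (SOME f. bij_betw f {..<card V} V)"

definition nlap_matrix :: "'a set \<Rightarrow> 'a set set \<Rightarrow> real mat" where
  "nlap_matrix V E = mat (card V) (card V)
     (\<lambda>(i, j). nlap_entry E (vertex_enum V i) (vertex_enum V j))"

text \<open>Subdivision-edge join G1 \<veebar> G2. Vertices: Inl (Inl v) for v in V1, Inl (Inr e) for e in E1
  (the set I(G1) of subdivision vertices), Inr w for w in V2.\<close>
definition sej_vertices :: "'a set \<Rightarrow> 'a set set \<Rightarrow> 'b set \<Rightarrow> (('a + 'a set) + 'b) set" where
  "sej_vertices V1 E1 V2 = (Inl \<circ> Inl) ` V1 \<union> (Inl \<circ> Inr) ` E1 \<union> Inr ` V2"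

definition sej_edges :: "'a set \<Rightarrow> 'a set set \<Rightarrow> 'b set \<Rightarrow> 'b set set \<Rightarrow> (('a + 'a set) + 'b) set set" where
  "sej_edges V1 E1 V2 E2 =
     {{Inl (Inl u), Inl (Inr e)} | u e. e \<in> E1 \<and> u \<in> e}
     \<union> (\<lambda>e. Inr ` e) ` E2
     \<union> {{Inl (Inr e), Inr w} | e w. e \<in> E1 \<and> w \<in> V2}"

end

theory Submission
  imports Defs
begin

text \<open>
  Order the vertices of \<open>G\<^sub>1 \<veebar> G\<^sub>2\<close> as \<open>I(G\<^sub>1)\<close>, \<open>V(G\<^sub>1)\<close>, \<open>V(G\<^sub>2)\<close> and
  evaluate the characteristic polynomial at \<open>x = y + 1\<close>. Subdivision vertices are pairwise
  non-adjacent, so the \<open>I(G\<^sub>1)\<close>-block of \<open>x I - \<L>\<close> is \<open>y I\<close>; eliminating it by a Schur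
  complement leaves a matrix on \<open>V(G\<^sub>1) \<union> V(G\<^sub>2)\<close> whose diagonal blocks are
  \<open>s\<^sub>1 (t\<^sub>1 I - \<L>(G\<^sub>1))\<close> and \<open>s\<^sub>2 (t\<^sub>2 I - \<L>(G\<^sub>2)) - d J\<close> and whose off-diagonal blocks are constant.
  Since both graphs are regular, every block has constant row sums, and the determinant of such
  a block matrix is the product of the determinants of the diagonal blocks times an explicit
  scalar (a rank-one correction). The eigenvalues \<open>\<mu>\<^sub>i, \<nu>\<^sub>i\<close> (\<open>i \<ge> 2\<close>) give the factors
  (iii) and (iv); the eigenvalues \<open>\<mu>\<^sub>1 = \<nu>\<^sub>1 = 0\<close> contribute exactly the row sums, which
  together with the correction form the quadratic (v). Both sides agree for all \<open>x > 2\<close>,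
  hence as polynomials.
\<close>

section \<open>Matrix and polynomial preliminaries\<close>

definition enum_mat ::
    "('u \<Rightarrow> 'v \<Rightarrow> 'c) \<Rightarrow> (nat \<Rightarrow> 'u) \<Rightarrow> (nat \<Rightarrow> 'v) \<Rightarrow> nat \<Rightarrow> nat \<Rightarrow> 'c mat"
  where "enum_mat F f g m k = mat m k (\<lambda>(i, j). F (f i) (g j))"

definition enum_join :: "nat \<Rightarrow> (nat \<Rightarrow> 'v) \<Rightarrow> (nat \<Rightarrow> 'v) \<Rightarrow> nat \<Rightarrow> 'v"
  where "enum_join m f g i = (if i < m then f i else g (i - m))"

lemma enum_mat_carrier [simp]: "enum_mat F f g m k \<in> carrier_mat m k"
  by (simp add: enum_mat_def)

lemma enum_mat_index [simp]: "i < m \<Longrightarrow> j < k \<Longrightarrow> enum_mat F f g m k $$ (i, j) = F (f i) (g j)"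
  by (simp add: enum_mat_def)

lemma enum_mat_dims [simp]:
  "dim_row (enum_mat F f g m k) = m" "dim_col (enum_mat F f g m k) = k"
  by (simp_all add: enum_mat_def)

lemma enum_mat_enum_join:
  "enum_mat F (enum_join m f g) (enum_join m' f' g') (m + k) (m' + k') =
     four_block_mat (enum_mat F f f' m m') (enum_mat F f g' m k')
       (enum_mat F g f' k m') (enum_mat F g g' k k')"
  by (intro eq_matI) (auto simp: enum_join_def)

lemma bij_betw_enum_join:
  assumes "bij_betw f {..<m} A" "bij_betw g {..<k} B" "A \<inter> B = {}"
  shows "bij_betw (enum_join m f g) {..<m + k} (A \<union> B)"
proof -
  have "bij_betw (enum_join m f g) {..<m} A"
    using assms(1) by (rule bij_betw_cong[THEN iffD1, rotated]) (simp add: enum_join_def)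
  moreover have "bij_betw (g \<circ> (\<lambda>i. i - m)) {m..<m + k} B"
    by (rule bij_betw_trans[OF _ assms(2)], rule bij_betw_byWitness[where f' = "\<lambda>i. i + m"]) auto
  then have "bij_betw (enum_join m f g) {m..<m + k} B"
    by (rule bij_betw_cong[THEN iffD1, rotated]) (simp add: enum_join_def)
  ultimately have "bij_betw (enum_join m f g) ({..<m} \<union> {m..<m + k}) (A \<union> B)"
    using assms(3) by (intro bij_betw_combine) auto
  moreover have "{..<m} \<union> {m..<m + k} = {..<m + k}" by auto
  ultimately show ?thesis by simp
qed

lemma bij_betw_comp_inj: "bij_betw f A B \<Longrightarrow> inj h \<Longrightarrow> bij_betw (h \<circ> f) A (h ` B)"
  by (rule bij_betw_trans) (auto intro: inj_on_imp_bij_betw inj_on_subset)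

lemma enum_mat_mult:
  assumes "bij_betw h {..<k} X"
  shows "enum_mat F f h m k * enum_mat G h g k n = enum_mat (\<lambda>u w. \<Sum>v\<in>X. F u v * G v w) f g m n"
proof (rule eq_matI)
  fix i j assume "i < dim_row (enum_mat (\<lambda>u w. \<Sum>v\<in>X. F u v * G v w) f g m n)"
    and "j < dim_col (enum_mat (\<lambda>u w. \<Sum>v\<in>X. F u v * G v w) f g m n)"
  then show "(enum_mat F f h m k * enum_mat G h g k n) $$ (i, j) =
      enum_mat (\<lambda>u w. \<Sum>v\<in>X. F u v * G v w) f g m n $$ (i, j)"
    by (simp add: scalar_prod_def atLeast0LessThan) (rule sum.reindex_bij_betw[OF assms])
qed auto

lemma det_conj_permutation:
  fixes A :: "'a :: comm_ring_1 mat"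
  assumes A: "A \<in> carrier_mat n n" and p: "p permutes {0..<n}"
  shows "det (mat n n (\<lambda>(i, j). A $$ (p i, p j))) = det A"
proof -
  define B where "B = mat n n (\<lambda>(i, j). A $$ (p i, j))"
  have B: "B \<in> carrier_mat n n" unfolding B_def by auto
  define C where "C = mat n n (\<lambda>(i, j). transpose_mat B $$ (p i, j))"
  have C: "C \<in> carrier_mat n n" unfolding C_def by auto
  have "mat n n (\<lambda>(i, j). A $$ (p i, p j)) = transpose_mat C"
    using p by (intro eq_matI) (auto simp: B_def C_def permutes_in_image)
  then have "det (mat n n (\<lambda>(i, j). A $$ (p i, p j))) = det C"
    using det_transpose[OF C] by simp
  also have "\<dots> = signof p * det (transpose_mat B)"
    unfolding C_def using B by (intro det_permute_rows[OF _ p]) auto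
  also have "\<dots> = signof p * signof p * det A"
    using det_transpose[OF B] det_permute_rows[OF A p] unfolding B_def by simp
  also have "signof p * signof p = (1::'a)" by (cases rule: sign_cases[of p]) auto
  finally show ?thesis by simp
qed

lemma det_enum_mat_reindex:
  fixes F :: "'v \<Rightarrow> 'v \<Rightarrow> 'a :: comm_ring_1"
  assumes f: "bij_betw f {..<n} V" and g: "bij_betw g {..<n} V"
  shows "det (enum_mat F f f n n) = det (enum_mat F g g n n)"
proof -
  define p where "p i = (if i < n then inv_into {..<n} f (g i) else i)" for i
  have "bij_betw p {..<n} {..<n}"
    using bij_betw_trans[OF g bij_betw_inv_into[OF f]]
    by (rule bij_betw_cong[THEN iffD1, rotated]) (simp add: p_def)
  then have p: "p permutes {0..<n}"
    by (intro bij_imp_permutes) (auto simp: p_def atLeast0LessThan)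
  have fp: "f (p i) = g i" if "i < n" for i
  proof -
    have "g i \<in> f ` {..<n}" using that f g by (auto simp: bij_betw_def)
    then show ?thesis using that by (simp add: p_def f_inv_into_f)
  qed
  have "det (enum_mat F f f n n) = det (mat n n (\<lambda>(i, j). enum_mat F f f n n $$ (p i, p j)))"
    by (rule det_conj_permutation[symmetric, OF _ p]) simp
  also have "mat n n (\<lambda>(i, j). enum_mat F f f n n $$ (p i, p j)) = enum_mat F g g n n"
    using p by (intro eq_matI) (auto simp: fp permutes_in_image)
  finally show ?thesis .
qed

lemma poly_char_poly_eq_det:
  fixes A :: "'a :: field mat"
  assumes A: "A \<in> carrier_mat n n"
  shows "poly (char_poly A) x = det (mat n n (\<lambda>(i, j). (if i = j then x else 0) - A $$ (i, j)))"
proof -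
  have "poly (char_poly A) x = det (- char_matrix A x)" by (rule char_poly_matrix[OF A])
  also have "- char_matrix A x = mat n n (\<lambda>(i, j). (if i = j then x else 0) - A $$ (i, j))"
    using A by (intro eq_matI) (auto simp: char_matrix_def)
  finally show ?thesis .
qed

lemma sum_mult_indicator_eq:
  "(\<Sum>l = 0..<(m::nat). f l * (if l = j then 1 else 0)) = (if j < m then f j else (0::'a::semiring_1))"
  by (induct m) (auto simp: less_Suc_eq)

lemma det_four_block_mat_smult_one:
  fixes B C D :: "'a :: field mat"
  assumes B: "B \<in> carrier_mat m k" and C: "C \<in> carrier_mat k m" and D: "D \<in> carrier_mat k k"
    and y: "y \<noteq> 0"
  shows "det (four_block_mat (y \<cdot>\<^sub>m 1\<^sub>m m) B C D) = y ^ m * det (D - (1 / y) \<cdot>\<^sub>m (C * B))"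
proof -
  define L where "L = four_block_mat (1\<^sub>m m) (0\<^sub>m m k) (- ((1 / y) \<cdot>\<^sub>m C)) (1\<^sub>m k)"
  define M where "M = four_block_mat (y \<cdot>\<^sub>m 1\<^sub>m m) B C D"
  have L: "L \<in> carrier_mat (m + k) (m + k)" and M: "M \<in> carrier_mat (m + k) (m + k)"
    using D by (auto simp: L_def M_def)
  have "L * M = four_block_mat (y \<cdot>\<^sub>m 1\<^sub>m m) B (0\<^sub>m k m) (D - (1 / y) \<cdot>\<^sub>m (C * B))"
    unfolding L_def M_def
  proof (subst mult_four_block_mat[of _ m m _ k _ _ _ _ m _ k], (use B C D in auto)[8],
      intro cong_four_block_mat)
    show "- ((1 / y) \<cdot>\<^sub>m C) * (y \<cdot>\<^sub>m 1\<^sub>m m) + 1\<^sub>m k * C = 0\<^sub>m k m"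
      using C y by (intro eq_matI) (auto simp: scalar_prod_def sum_mult_indicator_eq)
    show "- ((1 / y) \<cdot>\<^sub>m C) * B + 1\<^sub>m k * D = D - (1 / y) \<cdot>\<^sub>m (C * B)"
      using B C D by (intro eq_matI) (auto simp: scalar_prod_def sum_distrib_left)
  qed (use B C D in auto)
  moreover have "det L = 1" unfolding L_def
    by (subst det_four_block_mat_upper_right_zero[of _ m _ k]) (use C in auto)
  ultimately have "det M = det (four_block_mat (y \<cdot>\<^sub>m 1\<^sub>m m) B (0\<^sub>m k m) (D - (1 / y) \<cdot>\<^sub>m (C * B)))"
    using det_mult[OF L M] by simp
  also have "\<dots> = y ^ m * det (D - (1 / y) \<cdot>\<^sub>m (C * B))"
    by (subst det_four_block_mat_lower_left_zero[of _ m _ k]) (use B C D in auto)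
  finally show ?thesis unfolding M_def .
qed

text \<open>Border \<open>P\<close> by a row of ones and a column \<open>c\<close>: by the Schur complement the bordered
  matrix has determinant \<open>det (P - c J)\<close>, and a column operation that uses \<open>P 1 = p 1\<close> makes it
  block triangular with diagonal \<open>1 - c n / p\<close> and \<open>P\<close>.\<close>

lemma det_minus_const_mat:
  fixes P :: "'a :: field mat"
  assumes P: "P \<in> carrier_mat n n" and rows: "\<And>i. i < n \<Longrightarrow> (\<Sum>j<n. P $$ (i, j)) = p"
    and p: "p \<noteq> 0"
  shows "det (mat n n (\<lambda>(i, j). P $$ (i, j) - c)) = det P * (1 - c * of_nat n / p)"
proof -
  define B where "B = mat 1 n (\<lambda>_. 1 :: 'a)"
  define C where "C = mat n 1 (\<lambda>_. c)"
  define M where "M = four_block_mat (1 \<cdot>\<^sub>m 1\<^sub>m 1) B C P"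
  define N where "N = four_block_mat (1\<^sub>m 1) (0\<^sub>m 1 n) (mat n 1 (\<lambda>_. - c / p)) (1\<^sub>m n)"
  have B: "B \<in> carrier_mat 1 n" and C: "C \<in> carrier_mat n 1" by (auto simp: B_def C_def)
  have M: "M \<in> carrier_mat (1 + n) (1 + n)" and N: "N \<in> carrier_mat (1 + n) (1 + n)"
    using P by (auto simp: M_def N_def)
  have "det M = det (P - (1 / 1) \<cdot>\<^sub>m (C * B))"
    unfolding M_def using det_four_block_mat_smult_one[OF B C P, of 1] by simp
  also have "P - (1 / 1) \<cdot>\<^sub>m (C * B) = mat n n (\<lambda>(i, j). P $$ (i, j) - c)"
    using P by (intro eq_matI) (auto simp: B_def C_def scalar_prod_def)
  finally have detM: "det M = det (mat n n (\<lambda>(i, j). P $$ (i, j) - c))" .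
  have MN: "M * N = four_block_mat (mat 1 1 (\<lambda>_. 1 - c * of_nat n / p)) B (0\<^sub>m n 1) P"
    unfolding M_def N_def
  proof (subst mult_four_block_mat[of _ 1 1 _ n _ _ _ _ 1 _ n], (use B C P in auto)[8],
      intro cong_four_block_mat)
    show "C * 1\<^sub>m 1 + P * mat n 1 (\<lambda>_. - c / p) = 0\<^sub>m n 1"
    proof (rule eq_matI)
      fix i j assume i: "i < dim_row (0\<^sub>m n 1 :: 'a mat)" and j: "j < dim_col (0\<^sub>m n 1 :: 'a mat)"
      have "(C * 1\<^sub>m 1 + P * mat n 1 (\<lambda>_. - c / p)) $$ (i, j) = c + (\<Sum>l<n. P $$ (i, l)) * (- c / p)"
        using i j P
        by (simp add: C_def scalar_prod_def sum_distrib_right sum_negf sum_divide_distrib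
            atLeast0LessThan)
      also have "\<dots> = 0" using rows[of i] i p by simp
      finally show "(C * 1\<^sub>m 1 + P * mat n 1 (\<lambda>_. - c / p)) $$ (i, j) = 0\<^sub>m n 1 $$ (i, j)"
        using i j by simp
    qed (use P in auto)
  qed (use B C P in \<open>auto intro!: eq_matI simp: B_def scalar_prod_def sum_mult_indicator_eq\<close>)
  have "det (M * N) = (1 - c * of_nat n / p) * det P"
    unfolding MN by (subst det_four_block_mat_lower_left_zero[of _ 1 _ n]) (use B P in \<open>auto simp: det_single\<close>)
  moreover have "det N = 1" unfolding N_def
    by (subst det_four_block_mat_upper_right_zero[of _ 1 _ n]) auto
  ultimately show ?thesis using det_mult[OF M N] detM by simp
qed

lemma det_four_block_mat_const_off_diag:
  fixes P C :: "'a :: field mat"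
  assumes P: "P \<in> carrier_mat n n" and rowsP: "\<And>i. i < n \<Longrightarrow> (\<Sum>j<n. P $$ (i, j)) = p"
    and C: "C \<in> carrier_mat k k" and rowsC: "\<And>i. i < k \<Longrightarrow> (\<Sum>j<k. C $$ (i, j)) = c"
    and p: "p \<noteq> 0" and c: "c \<noteq> 0"
  shows "det (four_block_mat P (mat n k (\<lambda>_. q)) (mat k n (\<lambda>_. q')) C)
    = det P * det C * (1 - q * q' * of_nat k * of_nat n / (p * c))"
proof -
  define M where "M = four_block_mat P (mat n k (\<lambda>_. q)) (mat k n (\<lambda>_. q')) C"
  define N where "N = four_block_mat (1\<^sub>m n) (0\<^sub>m n k) (mat k n (\<lambda>_. - q' / c)) (1\<^sub>m k)"
  have M: "M \<in> carrier_mat (n + k) (n + k)" and N: "N \<in> carrier_mat (n + k) (n + k)"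
    using P C by (auto simp: M_def N_def)
  have MN: "M * N = four_block_mat (mat n n (\<lambda>(i, j). P $$ (i, j) - q * q' * of_nat k / c))
      (mat n k (\<lambda>_. q)) (0\<^sub>m k n) C"
    unfolding M_def N_def
  proof (subst mult_four_block_mat[of _ n n _ k _ _ _ _ n _ k], (use P C in auto)[8],
      intro cong_four_block_mat)
    show "mat k n (\<lambda>_. q') * 1\<^sub>m n + C * mat k n (\<lambda>_. - q' / c) = 0\<^sub>m k n"
    proof (rule eq_matI)
      fix i j assume i: "i < dim_row (0\<^sub>m k n :: 'a mat)" and j: "j < dim_col (0\<^sub>m k n :: 'a mat)"
      have "(mat k n (\<lambda>_. q') * 1\<^sub>m n + C * mat k n (\<lambda>_. - q' / c)) $$ (i, j)
          = q' + (\<Sum>l<k. C $$ (i, l)) * (- q' / c)"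
        using i j C
        by (simp add: scalar_prod_def sum_mult_indicator_eq sum_distrib_right sum_negf
            sum_divide_distrib atLeast0LessThan)
      also have "\<dots> = 0" using rowsC[of i] i c by simp
      finally show "(mat k n (\<lambda>_. q') * 1\<^sub>m n + C * mat k n (\<lambda>_. - q' / c)) $$ (i, j) = 0\<^sub>m k n $$ (i, j)"
        using i j by simp
    qed (use C in auto)
  qed (use P C c in \<open>auto intro!: eq_matI simp: scalar_prod_def sum_mult_indicator_eq\<close>)
  have "det (M * N) = det (mat n n (\<lambda>(i, j). P $$ (i, j) - q * q' * of_nat k / c)) * det C"
    unfolding MN by (subst det_four_block_mat_lower_left_zero[of _ n _ k]) (use C in auto)
  also have "det (mat n n (\<lambda>(i, j). P $$ (i, j) - q * q' * of_nat k / c))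
      = det P * (1 - q * q' * of_nat k / c * of_nat n / p)"
    by (rule det_minus_const_mat[OF P rowsP p])
  also have "det P * (1 - q * q' * of_nat k / c * of_nat n / p) * det C
      = det P * det C * (1 - q * q' * of_nat k * of_nat n / (p * c))"
    using p c by (simp add: field_simps)
  finally have detMN: "det (M * N) = det P * det C * (1 - q * q' * of_nat k * of_nat n / (p * c))" .
  have "det N = 1" unfolding N_def
    by (subst det_four_block_mat_upper_right_zero[of _ n _ k]) auto
  then show ?thesis using det_mult[OF M N] detMN unfolding M_def by simp
qed

lemma poly_prod_linear_scaled:
  fixes xs :: "'a :: comm_ring_1 list"
  assumes "length xs = n" "n \<ge> 1" "xs ! 0 = 0"
  shows "c ^ n * poly (\<Prod>a\<leftarrow>xs. [:- a, 1:]) t = (c * t) * (\<Prod>i\<in>{1..<n}. c * (t - xs ! i))"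
proof -
  have "poly (\<Prod>a\<leftarrow>xs. [:- a, 1:]) t = (\<Prod>i\<in>{0..<n}. t - xs ! i)"
    using assms(1) by (simp add: poly_prod_list prod.list_conv_set_nth poly_prod o_def)
  also have "{0..<n} = insert 0 {1..<n}" using assms(2) by auto
  finally have "poly (\<Prod>a\<leftarrow>xs. [:- a, 1:]) t = t * (\<Prod>i\<in>{1..<n}. t - xs ! i)"
    using assms(3) by simp
  moreover have "c ^ n = c * c ^ card {1..<n}" using assms(2) by (cases n) auto
  ultimately show ?thesis by (simp add: prod.distrib ac_simps)
qed

lemma poly_eqI_Ioi:
  fixes p q :: "real poly"
  assumes "\<And>x. x > a \<Longrightarrow> poly p x = poly q x"
  shows "p = q"
proof (rule ccontr)
  assume "p \<noteq> q"
  then have "finite {x. poly (p - q) x = 0}" by (intro poly_roots_finite) simp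
  moreover have "{a<..} \<subseteq> {x. poly (p - q) x = 0}" using assms by auto
  ultimately show False using infinite_Ioi finite_subset by blast
qed

section \<open>Regular graphs and the normalized Laplacian\<close>

lemma vertex_enum_bij:
  assumes "finite V" shows "bij_betw (vertex_enum V) {..<card V} V"
proof -
  obtain h where "bij_betw h {..<card V} V"
    using ex_bij_betw_nat_finite[OF assms] by (auto simp: atLeast0LessThan)
  then show ?thesis unfolding vertex_enum_def by (rule someI[where P = "\<lambda>f. bij_betw f {..<card V} V"])
qed

lemma simple_graph_edgeE:
  assumes "simple_graph V E" "e \<in> E"
  obtains u v where "e = {u, v}" "u \<noteq> v" "u \<in> V" "v \<in> V"
  using assms by (auto simp: simple_graph_def)

lemma simple_graph_finite_edges:
  assumes "simple_graph V E" shows "finite E"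
proof -
  have "E \<subseteq> Pow V" using assms by (auto simp: simple_graph_def)
  then show ?thesis using assms finite_subset by (auto simp: simple_graph_def)
qed

lemma simple_graph_card_edge: "simple_graph V E \<Longrightarrow> e \<in> E \<Longrightarrow> card e = 2"
  by (auto simp: simple_graph_def)

lemma simple_graph_no_loop: "simple_graph V E \<Longrightarrow> {u} \<notin> E"
  using simple_graph_card_edge by fastforce

lemma card_neighbours:
  assumes G: "simple_graph V E" and u: "u \<in> V"
  shows "card {w \<in> V. {u, w} \<in> E} = degree E u"
proof -
  have "bij_betw (\<lambda>w. {u, w}) {w \<in> V. {u, w} \<in> E} {e \<in> E. u \<in> e}"
  proof (rule bij_betwI')
    fix e assume e: "e \<in> {e \<in> E. u \<in> e}"
    then obtain a b where ab: "e = {a, b}" "a \<in> V" "b \<in> V"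
      using G by (auto elim: simple_graph_edgeE)
    then show "\<exists>w \<in> {w \<in> V. {u, w} \<in> E}. e = {u, w}"
      using e insert_commute[of a b "{}"] by (cases "u = a") auto
  qed (auto simp: doubleton_eq_iff)
  then show ?thesis unfolding degree_def by (rule bij_betw_same_card)
qed

lemma card_common_edges:
  assumes G: "simple_graph V E" and "u \<noteq> v"
  shows "card {e \<in> E. u \<in> e \<and> v \<in> e} = (if {u, v} \<in> E then 1 else 0)"
proof -
  have "e = {u, v}" if "e \<in> E" "u \<in> e" "v \<in> e" for e
  proof -
    obtain a b where "e = {a, b}" using G \<open>e \<in> E\<close> by (rule simple_graph_edgeE)
    then show ?thesis using that \<open>u \<noteq> v\<close> by auto
  qed
  then have "{e \<in> E. u \<in> e \<and> v \<in> e} = (if {u, v} \<in> E then {{u, v}} else {})"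
    by (auto simp del: insert_iff)
  then show ?thesis by simp
qed

lemma sum_degree:
  assumes G: "simple_graph V E"
  shows "(\<Sum>v\<in>V. degree E v) = 2 * card E"
proof -
  have fV: "finite V" and fE: "finite E"
    using G simple_graph_finite_edges by (auto simp: simple_graph_def)
  have "degree E v = (\<Sum>e\<in>E. if v \<in> e then 1 else 0)" for v
    unfolding degree_def card_eq_sum by (rule sum.inter_filter[OF fE])
  moreover have "card {v \<in> V. v \<in> e} = (\<Sum>v\<in>V. if v \<in> e then 1 else 0)" for e
    unfolding card_eq_sum by (rule sum.inter_filter[OF fV])
  ultimately have "(\<Sum>v\<in>V. degree E v) = (\<Sum>e\<in>E. card {v \<in> V. v \<in> e})"
    using sum.swap[of "\<lambda>v e. if v \<in> e then 1 else 0" E V] by simp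
  also have "\<dots> = (\<Sum>e\<in>E. 2)"
  proof (rule sum.cong)
    fix e assume "e \<in> E"
    then have "e \<subseteq> V" and "card e = 2"
      using G by (auto simp: simple_graph_def)
    then show "card {v \<in> V. v \<in> e} = 2" by (simp add: Collect_conj_eq Int_absorb1)
  qed simp
  finally show ?thesis by simp
qed

definition nlap_char_entry :: "'v set set \<Rightarrow> real \<Rightarrow> 'v \<Rightarrow> 'v \<Rightarrow> real" where
  "nlap_char_entry E x u v = (if u = v then x else 0) - nlap_entry E u v"

lemma nlap_entry_sym: "nlap_entry E u v = nlap_entry E v u"
  by (simp add: nlap_entry_def insert_commute mult.commute)

lemma nlap_char_entry_sym: "nlap_char_entry E x u v = nlap_char_entry E x v u"
  by (simp add: nlap_char_entry_def nlap_entry_sym eq_commute)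

lemma nlap_entry_regular:
  assumes "simple_graph V E" "regular V E r" "u \<in> V" "v \<in> V"
  shows "nlap_entry E u v = (if u = v then 1 else 0) - (if {u, v} \<in> E then 1 / real r else 0)"
  using assms simple_graph_no_loop[OF assms(1), of u] by (auto simp: nlap_entry_def regular_def)

lemma nlap_char_entry_row_sum:
  assumes G: "simple_graph V E" and reg: "regular V E r" and r: "r \<ge> 1" and u: "u \<in> V"
  shows "(\<Sum>v\<in>V. nlap_char_entry E x u v) = x"
proof -
  have fV: "finite V" using G by (simp add: simple_graph_def)
  have "(\<Sum>v\<in>V. nlap_char_entry E x u v)
      = (\<Sum>v\<in>V. (if u = v then x - 1 else 0) + (if {u, v} \<in> E then 1 / real r else 0))"
    using G reg u simple_graph_no_loop[OF G, of u]
    by (intro sum.cong) (auto simp: nlap_char_entry_def nlap_entry_regular)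
  also have "\<dots> = x - 1 + real (card {v \<in> V. {u, v} \<in> E}) / real r"
    using fV u by (simp add: sum.distrib sum.If_cases Int_def)
  also have "\<dots> = x"
    using reg r u by (simp add: card_neighbours[OF G u] regular_def)
  finally show ?thesis .
qed

lemma poly_char_poly_nlap_matrix:
  assumes V: "finite V" and g: "bij_betw g {..<card V} V"
  shows "poly (char_poly (nlap_matrix V E)) x
    = det (enum_mat (nlap_char_entry E x) g g (card V) (card V))"
proof -
  let ?n = "card V" and ?e = "vertex_enum V"
  have e: "bij_betw ?e {..<?n} V" using V by (rule vertex_enum_bij)
  have "poly (char_poly (nlap_matrix V E)) x
      = det (mat ?n ?n (\<lambda>(i, j). (if i = j then x else 0) - nlap_matrix V E $$ (i, j)))"
    by (rule poly_char_poly_eq_det) (simp add: nlap_matrix_def)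
  also have "mat ?n ?n (\<lambda>(i, j). (if i = j then x else 0) - nlap_matrix V E $$ (i, j))
      = enum_mat (nlap_char_entry E x) ?e ?e ?n ?n"
  proof (rule eq_matI)
    fix i j assume "i < dim_row (enum_mat (nlap_char_entry E x) ?e ?e ?n ?n)"
      and "j < dim_col (enum_mat (nlap_char_entry E x) ?e ?e ?n ?n)"
    moreover have "?e i = ?e j \<longleftrightarrow> i = j" if "i < ?n" "j < ?n"
      using e that by (auto simp: bij_betw_def inj_on_def)
    ultimately show "mat ?n ?n (\<lambda>(i, j). (if i = j then x else 0) - nlap_matrix V E $$ (i, j)) $$ (i, j)
        = enum_mat (nlap_char_entry E x) ?e ?e ?n ?n $$ (i, j)"
      by (simp add: nlap_matrix_def nlap_char_entry_def)
  qed auto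
  also have "det \<dots> = det (enum_mat (nlap_char_entry E x) g g ?n ?n)"
    by (rule det_enum_mat_reindex[OF e g])
  finally show ?thesis .
qed

section \<open>The subdivision-edge join\<close>

lemma sej_edge_vertex_subdiv:
  "{Inl (Inl u), Inl (Inr e)} \<in> sej_edges V1 E1 V2 E2 \<longleftrightarrow> e \<in> E1 \<and> u \<in> e"
  unfolding sej_edges_def by (auto simp: doubleton_eq_iff)

lemma sej_edge_subdiv_right:
  "{Inl (Inr e), Inr w} \<in> sej_edges V1 E1 V2 E2 \<longleftrightarrow> e \<in> E1 \<and> w \<in> V2"
  unfolding sej_edges_def by (auto simp: doubleton_eq_iff)

lemma sej_edge_right_right:
  fixes V1 :: "'a set" and V2 :: "'b set"
  shows "{Inr w, Inr w'} \<in> sej_edges V1 E1 V2 E2 \<longleftrightarrow> {w, w'} \<in> E2"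
proof
  assume "{Inr w, Inr w'} \<in> sej_edges V1 E1 V2 E2"
  then obtain e where e: "e \<in> E2" "Inr ` e = ({Inr w, Inr w'} :: (('a + 'a set) + 'b) set)"
    unfolding sej_edges_def by (auto simp: doubleton_eq_iff)
  then have "Inr ` e = (Inr ` {w, w'} :: (('a + 'a set) + 'b) set)" by simp
  then have "e = {w, w'}" by (rule inj_image_eq_iff[OF inj_Inr, THEN iffD1])
  then show "{w, w'} \<in> E2" using e(1) by simp
next
  assume "{w, w'} \<in> E2"
  then show "{Inr w, Inr w'} \<in> sej_edges V1 E1 V2 E2"
    unfolding sej_edges_def by (intro UnI1 UnI2 image_eqI[where x = "{w, w'}"]) auto
qed

lemma sej_no_edge_vertex_vertex: "{Inl (Inl u), Inl (Inl v)} \<notin> sej_edges V1 E1 V2 E2"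
  unfolding sej_edges_def by (auto simp: doubleton_eq_iff)

lemma sej_no_edge_vertex_right: "{Inl (Inl u), Inr w} \<notin> sej_edges V1 E1 V2 E2"
  unfolding sej_edges_def by (auto simp: doubleton_eq_iff)

lemma sej_no_edge_subdiv_subdiv: "{Inl (Inr e), Inl (Inr e')} \<notin> sej_edges V1 E1 V2 E2"
  unfolding sej_edges_def by (auto simp: doubleton_eq_iff)

lemma degree_sej_vertex: "degree (sej_edges V1 E1 V2 E2) (Inl (Inl v)) = degree E1 v"
proof -
  have "{s \<in> sej_edges V1 E1 V2 E2. Inl (Inl v) \<in> s}
      = (\<lambda>e. {Inl (Inl v), Inl (Inr e)}) ` {e \<in> E1. v \<in> e}"
    unfolding sej_edges_def by (auto simp: doubleton_eq_iff)
  moreover have "inj_on (\<lambda>e. {Inl (Inl v), Inl (Inr e)} :: (('a + 'a set) + 'b) set) {e \<in> E1. v \<in> e}"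
    by (auto simp: inj_on_def doubleton_eq_iff)
  ultimately show ?thesis unfolding degree_def by (simp add: card_image)
qed

lemma degree_sej_subdiv:
  assumes G1: "simple_graph V1 E1" and G2: "simple_graph V2 E2" and e: "e \<in> E1"
  shows "degree (sej_edges V1 E1 V2 E2) (Inl (Inr e)) = 2 + card V2"
proof -
  have ce: "card e = 2" by (rule simple_graph_card_edge[OF G1 e])
  then have fe: "finite e" by (metis card.infinite zero_neq_numeral)
  have "{s \<in> sej_edges V1 E1 V2 E2. Inl (Inr e) \<in> s} =
     (\<lambda>u. {Inl (Inl u), Inl (Inr e)}) ` e \<union> (\<lambda>w. {Inl (Inr e), Inr w}) ` V2"
    using e unfolding sej_edges_def by (auto simp: doubleton_eq_iff)
  moreover have "card ((\<lambda>u. {Inl (Inl u), Inl (Inr e)}) ` e \<union> (\<lambda>w. {Inl (Inr e), Inr w}) ` V2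
      :: (('a + 'a set) + 'b) set set) = card e + card V2"
  proof (subst card_Un_disjoint)
    show "card ((\<lambda>u. {Inl (Inl u), Inl (Inr e)}) ` e :: (('a + 'a set) + 'b) set set) +
      card ((\<lambda>w. {Inl (Inr e), Inr w}) ` V2 :: (('a + 'a set) + 'b) set set) = card e + card V2"
      by (subst card_image, auto simp: inj_on_def doubleton_eq_iff)+
  qed (use fe G2 in \<open>auto simp: doubleton_eq_iff simple_graph_def\<close>)
  ultimately show ?thesis unfolding degree_def using ce by simp
qed

lemma degree_sej_right:
  assumes G1: "simple_graph V1 E1" and G2: "simple_graph V2 E2" and w: "w \<in> V2"
  shows "degree (sej_edges V1 E1 V2 E2) (Inr w) = degree E2 w + card E1"
proof -
  have "{s \<in> sej_edges V1 E1 V2 E2. Inr w \<in> s} =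
     (\<lambda>e. Inr ` e) ` {e \<in> E2. w \<in> e} \<union> (\<lambda>e. {Inl (Inr e), Inr w}) ` E1"
    using w unfolding sej_edges_def by (auto simp: doubleton_eq_iff)
  moreover have "card ((\<lambda>e. Inr ` e) ` {e \<in> E2. w \<in> e} \<union> (\<lambda>e. {Inl (Inr e), Inr w}) ` E1
      :: (('a + 'a set) + 'b) set set) = card {e \<in> E2. w \<in> e} + card E1"
  proof (subst card_Un_disjoint)
    have "inj_on (\<lambda>e. (Inr :: 'b \<Rightarrow> ('a + 'a set) + 'b) ` e) {e \<in> E2. w \<in> e}"
      by (auto simp: inj_on_def inj_image_eq_iff)
    then show "card ((\<lambda>e. Inr ` e) ` {e \<in> E2. w \<in> e} :: (('a + 'a set) + 'b) set set) +
      card ((\<lambda>e. {Inl (Inr e), Inr w}) ` E1 :: (('a + 'a set) + 'b) set set)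
        = card {e \<in> E2. w \<in> e} + card E1"
      by (subst card_image, assumption, subst card_image) (auto simp: inj_on_def doubleton_eq_iff)
  qed (use simple_graph_finite_edges[OF G1] simple_graph_finite_edges[OF G2]
      in \<open>auto simp: doubleton_eq_iff\<close>)
  ultimately show ?thesis unfolding degree_def by simp
qed

locale regular_sej =
  fixes V1 :: "'a set" and E1 :: "'a set set" and V2 :: "'b set" and E2 :: "'b set set"
    and r1 r2 :: nat
  assumes G1: "simple_graph V1 E1" and G2: "simple_graph V2 E2"
    and reg1: "regular V1 E1 r1" and reg2: "regular V2 E2 r2"
    and r1_pos: "r1 \<ge> 1" and r2_pos: "r2 \<ge> 1"
begin

abbreviation "SV \<equiv> sej_vertices V1 E1 V2"
abbreviation "SE \<equiv> sej_edges V1 E1 V2 E2"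

text \<open>Degrees in the join of a subdivision vertex and of a vertex of \<open>G\<^sub>2\<close>, and the
  (absolute values of the) Laplacian entries between a subdivision vertex and its neighbours
  in \<open>G\<^sub>1\<close> resp. \<open>G\<^sub>2\<close>.\<close>

definition "deg_subdiv = 2 + real (card V2)"
definition "deg_right = real r2 + real (card E1)"
definition "wt1 = 1 / sqrt (deg_subdiv * real r1)"
definition "wt2 = 1 / sqrt (deg_subdiv * deg_right)"

lemma deg_subdiv_pos: "deg_subdiv > 0" and deg_right_pos: "deg_right > 0"
  using r2_pos by (auto simp: deg_subdiv_def deg_right_def)

lemma finite_V1: "finite V1" and finite_V2: "finite V2" and finite_E1: "finite E1"
  using G1 G2 simple_graph_finite_edges[OF G1] by (auto simp: simple_graph_def)

lemma degree1: "v \<in> V1 \<Longrightarrow> degree E1 v = r1" and degree2: "w \<in> V2 \<Longrightarrow> degree E2 w = r2"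
  using reg1 reg2 by (auto simp: regular_def)

lemma card_V1_mult_r1: "real (card V1) * real r1 = 2 * real (card E1)"
proof -
  have "(\<Sum>v\<in>V1. degree E1 v) = card V1 * r1" by (simp add: degree1)
  then show ?thesis using sum_degree[OF G1] by (metis of_nat_mult of_nat_numeral)
qed

lemma sej_char_subdiv_subdiv:
  "nlap_char_entry SE x (Inl (Inr e)) (Inl (Inr e')) = (if e = e' then x - 1 else 0)"
  using sej_no_edge_subdiv_subdiv[of e e' V1 E1 V2 E2]
  by (auto simp: nlap_char_entry_def nlap_entry_def)

lemma sej_char_subdiv_vertex:
  assumes "e \<in> E1" "v \<in> V1"
  shows "nlap_char_entry SE x (Inl (Inr e)) (Inl (Inl v)) = (if v \<in> e then wt1 else 0)"
  using assms sej_edge_vertex_subdiv[of v e V1 E1 V2 E2] degree_sej_vertex[of V1 E1 V2 E2 v]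
    degree_sej_subdiv[OF G1 G2 assms(1)] degree1[OF assms(2)]
  by (auto simp: nlap_char_entry_def nlap_entry_def wt1_def deg_subdiv_def insert_commute)

lemma sej_char_subdiv_right:
  assumes "e \<in> E1" "w \<in> V2"
  shows "nlap_char_entry SE x (Inl (Inr e)) (Inr w) = wt2"
  using assms sej_edge_subdiv_right[of e w V1 E1 V2 E2] degree_sej_right[OF G1 G2 assms(2)]
    degree_sej_subdiv[OF G1 G2 assms(1)] degree2[OF assms(2)]
  by (auto simp: nlap_char_entry_def nlap_entry_def wt2_def deg_subdiv_def deg_right_def)

lemma sej_char_vertex_vertex:
  "nlap_char_entry SE x (Inl (Inl u)) (Inl (Inl v)) = (if u = v then x - 1 else 0)"
  using sej_no_edge_vertex_vertex[of u v V1 E1 V2 E2]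
  by (auto simp: nlap_char_entry_def nlap_entry_def)

lemma sej_char_vertex_right: "nlap_char_entry SE x (Inl (Inl u)) (Inr w) = 0"
  using sej_no_edge_vertex_right[of u w V1 E1 V2 E2]
  by (auto simp: nlap_char_entry_def nlap_entry_def)

lemma sej_char_right_right:
  assumes "w \<in> V2" "w' \<in> V2"
  shows "nlap_char_entry SE x (Inr w) (Inr w')
    = (if w = w' then x - 1 else 0) + (if {w, w'} \<in> E2 then 1 / deg_right else 0)"
  using assms sej_edge_right_right[of w w' V1 E1 V2 E2] simple_graph_no_loop[OF G2, of w]
    degree_sej_right[OF G1 G2 assms(1)] degree_sej_right[OF G1 G2 assms(2)]
    degree2[OF assms(1)] degree2[OF assms(2)]
  by (auto simp: nlap_char_entry_def nlap_entry_def deg_right_def)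

definition "enum_V1V2 = enum_join (card V1) (Inl \<circ> Inl \<circ> vertex_enum V1) (Inr \<circ> vertex_enum V2)"
definition "enum_sej = enum_join (card E1) (Inl \<circ> Inr \<circ> vertex_enum E1) enum_V1V2"

lemma bij_enum_V1V2:
  "bij_betw enum_V1V2 {..<card V1 + card V2} ((Inl \<circ> Inl) ` V1 \<union> Inr ` V2)"
  unfolding enum_V1V2_def o_assoc
  by (intro bij_betw_enum_join bij_betw_comp_inj vertex_enum_bij finite_V1 finite_V2) (auto simp: inj_def)

lemma bij_enum_sej: "bij_betw enum_sej {..<card E1 + (card V1 + card V2)} SV"
proof -
  have "bij_betw enum_sej {..<card E1 + (card V1 + card V2)}
      ((Inl \<circ> Inr) ` E1 \<union> ((Inl \<circ> Inl) ` V1 \<union> Inr ` V2))"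
    unfolding enum_sej_def o_assoc
    by (intro bij_betw_enum_join bij_betw_comp_inj vertex_enum_bij finite_E1 bij_enum_V1V2) (auto simp: inj_def)
  moreover have "(Inl \<circ> Inr) ` E1 \<union> ((Inl \<circ> Inl) ` V1 \<union> Inr ` V2) = SV"
    unfolding sej_vertices_def by auto
  ultimately show ?thesis by simp
qed

end

text \<open>The evaluation point is \<open>y + 1\<close>; any \<open>y > 1\<close> keeps the row sums used below positive.\<close>

locale sej_eval = regular_sej +
  fixes y :: real
  assumes y_gt_1: "y > 1"
begin

abbreviation "sej_char \<equiv> nlap_char_entry SE (y + 1)"

definition schur where
  "schur u v = sej_char u v - (\<Sum>e\<in>E1. sej_char u (Inl (Inr e)) * sej_char (Inl (Inr e)) v) / y"

text \<open>The blocks of the Schur complement \<open>schur\<close> are described by these constants, see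
  \<open>enum_mat_schur_blocks\<close>.\<close>

definition "scale1 = - 1 / (deg_subdiv * y)"
definition "eval1 = 2 - deg_subdiv * y\<^sup>2"
definition "scale2 = real r2 / deg_right"
definition "eval2 = 1 + y / scale2"
definition "offdiag = - wt1 * wt2 * real r1 / y"
definition "corr = wt2\<^sup>2 * real (card E1) / y"

lemma poly_char_poly_sej_eq_det_schur:
  "poly (char_poly (nlap_matrix SV SE)) (y + 1)
    = y ^ card E1 * det (enum_mat schur enum_V1V2 enum_V1V2 (card V1 + card V2) (card V1 + card V2))"
proof -
  let ?m = "card E1" and ?n = "card V1 + card V2" and ?s = "Inl \<circ> Inr \<circ> vertex_enum E1"
  let ?g = "enum_V1V2"
  have s: "bij_betw ?s {..<?m} ((Inl \<circ> Inr) ` E1)"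
    unfolding o_assoc by (intro bij_betw_comp_inj vertex_enum_bij finite_E1) (auto simp: inj_def)
  have "card SV = ?m + ?n" using bij_betw_same_card[OF bij_enum_sej] by simp
  then have "poly (char_poly (nlap_matrix SV SE)) (y + 1) = det (enum_mat sej_char enum_sej enum_sej (?m + ?n) (?m + ?n))"
    using poly_char_poly_nlap_matrix[of SV enum_sej SE] bij_enum_sej bij_betw_finite by force
  also have "enum_mat sej_char enum_sej enum_sej (?m + ?n) (?m + ?n)
      = four_block_mat (y \<cdot>\<^sub>m 1\<^sub>m ?m) (enum_mat sej_char ?s ?g ?m ?n)
          (enum_mat sej_char ?g ?s ?n ?m) (enum_mat sej_char ?g ?g ?n ?n)"
  proof -
    have "vertex_enum E1 i = vertex_enum E1 j \<longleftrightarrow> i = j" if "i < ?m" "j < ?m" for i j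
      using vertex_enum_bij[OF finite_E1] that by (auto simp: bij_betw_def inj_on_def)
    then have "enum_mat sej_char ?s ?s ?m ?m = y \<cdot>\<^sub>m 1\<^sub>m ?m"
      by (intro eq_matI) (auto simp: sej_char_subdiv_subdiv)
    then show ?thesis unfolding enum_sej_def enum_mat_enum_join by simp
  qed
  also have "det \<dots> = y ^ ?m * det (enum_mat sej_char ?g ?g ?n ?n
      - (1 / y) \<cdot>\<^sub>m (enum_mat sej_char ?g ?s ?n ?m * enum_mat sej_char ?s ?g ?m ?n))"
    using y_gt_1 by (intro det_four_block_mat_smult_one) auto
  also have "enum_mat sej_char ?g ?g ?n ?n
        - (1 / y) \<cdot>\<^sub>m (enum_mat sej_char ?g ?s ?n ?m * enum_mat sej_char ?s ?g ?m ?n)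
      = enum_mat schur ?g ?g ?n ?n"
  proof -
    have "(\<Sum>v\<in>(Inl \<circ> Inr) ` E1. G v) = (\<Sum>e\<in>E1. G (Inl (Inr e)))" for G :: "_ \<Rightarrow> real"
      by (subst sum.reindex) (auto simp: inj_on_def)
    then show ?thesis
      by (intro eq_matI) (auto simp: enum_mat_mult[OF s] schur_def diff_divide_distrib)
  qed
  finally show ?thesis .
qed

lemma schur_sym: "schur u v = schur v u"
proof -
  have "sej_char u (Inl (Inr e)) * sej_char (Inl (Inr e)) v = sej_char v (Inl (Inr e)) * sej_char (Inl (Inr e)) u" for e
    by (metis nlap_char_entry_sym mult.commute)
  then show ?thesis unfolding schur_def by (simp only: nlap_char_entry_sym[of _ _ u v])
qed

lemma schur_vertex_vertex:
  assumes u: "u \<in> V1" and v: "v \<in> V1"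
  shows "schur (Inl (Inl u)) (Inl (Inl v)) = scale1 * nlap_char_entry E1 eval1 u v"
proof -
  have "(\<Sum>e\<in>E1. sej_char (Inl (Inl u)) (Inl (Inr e)) * sej_char (Inl (Inr e)) (Inl (Inl v)))
      = (\<Sum>e\<in>E1. if u \<in> e \<and> v \<in> e then wt1\<^sup>2 else 0)"
    using u v by (intro sum.cong)
      (auto simp: sej_char_subdiv_vertex nlap_char_entry_sym[of _ _ "Inl (Inl u)"] power2_eq_square)
  also have "\<dots> = wt1\<^sup>2 * card {e \<in> E1. u \<in> e \<and> v \<in> e}"
    using finite_E1 by (simp add: sum.If_cases Int_def)
  also have "card {e \<in> E1. u \<in> e \<and> v \<in> e} = (if u = v then r1 else if {u, v} \<in> E1 then 1 else 0)"
    using degree1[OF u] card_common_edges[OF G1] by (cases "u = v") (simp_all add: degree_def)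
  finally have schur_uv: "schur (Inl (Inl u)) (Inl (Inl v)) = (if u = v then y else 0)
      - wt1\<^sup>2 * (if u = v then real r1 else if {u, v} \<in> E1 then 1 else 0) / y"
    by (simp add: schur_def sej_char_vertex_vertex)
  have wt1_sq: "wt1 * wt1 = 1 / (deg_subdiv * real r1)"
    unfolding wt1_def using deg_subdiv_pos by simp
  have c: "deg_subdiv > 0" and y: "y > 0" and r1: "real r1 > 0"
    using deg_subdiv_pos y_gt_1 r1_pos by auto
  show ?thesis
    unfolding schur_uv nlap_char_entry_def nlap_entry_regular[OF G1 reg1 u v]
    using c y r1 simple_graph_no_loop[OF G1, of u]
    by (cases "u = v") (simp_all add: wt1_sq scale1_def eval1_def field_simps power2_eq_square)
qed

lemma schur_vertex_right:
  assumes u: "u \<in> V1" and w: "w \<in> V2"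
  shows "schur (Inl (Inl u)) (Inr w) = offdiag"
proof -
  have "(\<Sum>e\<in>E1. sej_char (Inl (Inl u)) (Inl (Inr e)) * sej_char (Inl (Inr e)) (Inr w))
      = (\<Sum>e\<in>E1. if u \<in> e then wt1 * wt2 else 0)"
    using u w by (intro sum.cong)
      (auto simp: sej_char_subdiv_vertex sej_char_subdiv_right nlap_char_entry_sym[of _ _ "Inl (Inl u)"])
  also have "\<dots> = wt1 * wt2 * r1"
    using finite_E1 degree1[OF u] by (simp add: sum.If_cases Int_def degree_def)
  finally show ?thesis by (simp add: schur_def sej_char_vertex_right offdiag_def)
qed

lemma schur_right_right:
  assumes w: "w \<in> V2" and w': "w' \<in> V2"
  shows "schur (Inr w) (Inr w') = scale2 * nlap_char_entry E2 eval2 w w' - corr"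
proof -
  have "(\<Sum>e\<in>E1. sej_char (Inr w) (Inl (Inr e)) * sej_char (Inl (Inr e)) (Inr w')) = wt2\<^sup>2 * card E1"
    using w w' by (simp add: sej_char_subdiv_right nlap_char_entry_sym[of _ _ "Inr w"] power2_eq_square)
  moreover have "real r2 > 0" "deg_right > 0" "y > 0" using deg_right_pos y_gt_1 r2_pos by auto
  ultimately show ?thesis
    using w w' simple_graph_no_loop[OF G2, of w]
    by (cases "w = w'"; cases "{w, w'} \<in> E2")
       (simp_all add: schur_def sej_char_right_right nlap_char_entry_def[of E2] nlap_entry_regular[OF G2 reg2]
        scale2_def eval2_def corr_def field_simps)
qed

lemma schur_right_vertex: "u \<in> V1 \<Longrightarrow> w \<in> V2 \<Longrightarrow> schur (Inr w) (Inl (Inl u)) = offdiag"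
  using schur_sym schur_vertex_right by metis

lemma enum_mat_schur_blocks:
  "enum_mat schur enum_V1V2 enum_V1V2 (card V1 + card V2) (card V1 + card V2) = four_block_mat
     (scale1 \<cdot>\<^sub>m enum_mat (nlap_char_entry E1 eval1) (vertex_enum V1) (vertex_enum V1) (card V1) (card V1))
     (mat (card V1) (card V2) (\<lambda>_. offdiag)) (mat (card V2) (card V1) (\<lambda>_. offdiag))
     (mat (card V2) (card V2) (\<lambda>(i, j).
        (scale2 \<cdot>\<^sub>m enum_mat (nlap_char_entry E2 eval2) (vertex_enum V2) (vertex_enum V2) (card V2) (card V2))
          $$ (i, j) - corr))"
proof -
  have "vertex_enum V1 i \<in> V1" if "i < card V1" for i
    using vertex_enum_bij[OF finite_V1] that by (auto dest: bij_betwE)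
  moreover have "vertex_enum V2 i \<in> V2" if "i < card V2" for i
    using vertex_enum_bij[OF finite_V2] that by (auto dest: bij_betwE)
  ultimately show ?thesis
    unfolding enum_V1V2_def enum_mat_enum_join
    by (intro cong_four_block_mat eq_matI)
      (auto simp: schur_vertex_vertex schur_vertex_right schur_right_vertex schur_right_right)
qed

lemma scale1_eval1_pos: "scale1 * eval1 > 0"
proof -
  have "2 * y\<^sup>2 \<le> deg_subdiv * y\<^sup>2" by (rule mult_right_mono) (auto simp: deg_subdiv_def)
  moreover have "1 < y\<^sup>2" using y_gt_1 by (simp add: one_less_power)
  ultimately have "deg_subdiv * y\<^sup>2 > 2" by linarith
  then show ?thesis
    using deg_subdiv_pos y_gt_1 by (simp add: scale1_def eval1_def divide_neg_pos)
qed

lemma scale2_eval2: "scale2 * eval2 = scale2 + y"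
  using r2_pos deg_right_pos by (simp add: scale2_def eval2_def field_simps)

lemma scale2_eval2_pos: "scale2 * eval2 > 0"
  unfolding scale2_eval2 using y_gt_1 deg_right_pos by (simp add: scale2_def add_nonneg_pos)

lemma scale2_eval2_corr_pos: "scale2 * eval2 - real (card V2) * corr > 0"
proof -
  have "real (card V2) * real (card E1) \<le> real (card V2) * deg_right"
    by (intro mult_left_mono) (auto simp: deg_right_def)
  also have "\<dots> < deg_subdiv * deg_right"
    using deg_right_pos by (intro mult_strict_right_mono) (auto simp: deg_subdiv_def)
  finally have "real (card V2) * real (card E1) < deg_subdiv * deg_right" .
  then have "real (card V2) * corr < 1 / y"
    using deg_subdiv_pos deg_right_pos y_gt_1
    by (simp add: corr_def wt2_def power_divide field_simps)
  also have "\<dots> < 1" using y_gt_1 by simp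
  also have "\<dots> < y" by (rule y_gt_1)
  finally have "real (card V2) * corr < y" .
  moreover have "scale2 \<ge> 0" using deg_right_pos by (simp add: scale2_def)
  ultimately show ?thesis unfolding scale2_eval2 by linarith
qed

lemma det_schur:
  "det (enum_mat schur enum_V1V2 enum_V1V2 (card V1 + card V2) (card V1 + card V2))
   = scale1 ^ card V1 * poly (char_poly (nlap_matrix V1 E1)) eval1
     * (scale2 ^ card V2 * poly (char_poly (nlap_matrix V2 E2)) eval2)
     * (1 - corr * real (card V2) / (scale2 * eval2))
     * (1 - offdiag * offdiag * real (card V2) * real (card V1)
          / (scale1 * eval1 * (scale2 * eval2 - real (card V2) * corr)))"
proof -
  let ?n1 = "card V1" and ?n2 = "card V2" and ?e1 = "vertex_enum V1" and ?e2 = "vertex_enum V2"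
  define P where "P = scale1 \<cdot>\<^sub>m enum_mat (nlap_char_entry E1 eval1) ?e1 ?e1 ?n1 ?n1"
  define C where "C = scale2 \<cdot>\<^sub>m enum_mat (nlap_char_entry E2 eval2) ?e2 ?e2 ?n2 ?n2"
  define C' where "C' = mat ?n2 ?n2 (\<lambda>(i, j). C $$ (i, j) - corr)"
  have e1: "bij_betw ?e1 {..<?n1} V1" and e2: "bij_betw ?e2 {..<?n2} V2"
    using vertex_enum_bij finite_V1 finite_V2 by auto
  have P: "P \<in> carrier_mat ?n1 ?n1" and C: "C \<in> carrier_mat ?n2 ?n2" and C': "C' \<in> carrier_mat ?n2 ?n2"
    by (auto simp: P_def C_def C'_def)
  have rowsP: "(\<Sum>j<?n1. P $$ (i, j)) = scale1 * eval1" if "i < ?n1" for i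
  proof -
    have "(\<Sum>j<?n1. P $$ (i, j)) = scale1 * (\<Sum>j<?n1. nlap_char_entry E1 eval1 (?e1 i) (?e1 j))"
      using that by (simp add: P_def sum_distrib_left)
    also have "\<dots> = scale1 * eval1"
      using that bij_betwE[OF e1] nlap_char_entry_row_sum[OF G1 reg1 r1_pos]
      by (simp add: sum.reindex_bij_betw[OF e1, of "nlap_char_entry E1 eval1 (?e1 i)"])
    finally show ?thesis .
  qed
  have rowsC: "(\<Sum>j<?n2. C $$ (i, j)) = scale2 * eval2" if "i < ?n2" for i
  proof -
    have "(\<Sum>j<?n2. C $$ (i, j)) = scale2 * (\<Sum>j<?n2. nlap_char_entry E2 eval2 (?e2 i) (?e2 j))"
      using that by (simp add: C_def sum_distrib_left)
    also have "\<dots> = scale2 * eval2"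
      using that bij_betwE[OF e2] nlap_char_entry_row_sum[OF G2 reg2 r2_pos]
      by (simp add: sum.reindex_bij_betw[OF e2, of "nlap_char_entry E2 eval2 (?e2 i)"])
    finally show ?thesis .
  qed
  have rowsC': "(\<Sum>j<?n2. C' $$ (i, j)) = scale2 * eval2 - real ?n2 * corr" if "i < ?n2" for i
    using that rowsC[OF that] by (simp add: C'_def sum_subtractf)
  have "det (enum_mat schur enum_V1V2 enum_V1V2 (?n1 + ?n2) (?n1 + ?n2))
      = det P * det C' * (1 - offdiag * offdiag * real ?n2 * real ?n1
          / (scale1 * eval1 * (scale2 * eval2 - real ?n2 * corr)))"
    unfolding enum_mat_schur_blocks P_def[symmetric] C_def[symmetric] C'_def[symmetric]
    using scale1_eval1_pos scale2_eval2_corr_pos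
    by (intro det_four_block_mat_const_off_diag[OF P rowsP C' rowsC']) auto
  also have "det C' = det C * (1 - corr * real ?n2 / (scale2 * eval2))"
    unfolding C'_def using scale2_eval2_pos by (intro det_minus_const_mat[OF C rowsC]) auto
  also have "det P = scale1 ^ ?n1 * poly (char_poly (nlap_matrix V1 E1)) eval1"
    by (simp add: P_def poly_char_poly_nlap_matrix[OF finite_V1 e1])
  also have "det C = scale2 ^ ?n2 * poly (char_poly (nlap_matrix V2 E2)) eval2"
    by (simp add: C_def poly_char_poly_nlap_matrix[OF finite_V2 e2])
  finally show ?thesis by (simp only: ac_simps)
qed

lemma sej_scalar_identity:
  "y * (scale1 * eval1 * (scale2 * eval2 - real (card V2) * corr)
        - offdiag * offdiag * real (card V2) * real (card V1))
   = (y + 1) * ((y + 1)\<^sup>2 - (2 + real (card E1) / deg_right) * (y + 1)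
       + (2 * real (card E1) / deg_right + real (card V2) * real r2 / (deg_subdiv * deg_right)))"
proof -
  let ?c = deg_subdiv and ?R = deg_right and ?m = "real (card E1)" and ?n2 = "real (card V2)"
  have c: "?c > 0" and R: "?R > 0" and y: "y > 0" and r1: "real r1 > 0"
    using deg_subdiv_pos deg_right_pos y_gt_1 r1_pos by auto
  have n2: "?n2 = ?c - 2" and r2: "real r2 = ?R - ?m"
    by (simp_all add: deg_subdiv_def deg_right_def)
  have p: "scale1 * eval1 = y - 2 / (?c * y)"
    using c y by (simp add: scale1_def eval1_def field_simps power2_eq_square)
  have K: "scale2 * eval2 - ?n2 * corr = (?R - ?m) / ?R + y - ?n2 * ?m / (?c * ?R * y)"
    unfolding scale2_eval2 using c R y by (simp add: scale2_def r2 corr_def wt2_def power_divide)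
  have "offdiag * offdiag * real (card V1) = (real (card V1) * real r1) / (?c\<^sup>2 * ?R * y\<^sup>2)"
    using c R y r1 by (simp add: offdiag_def wt1_def wt2_def field_simps power2_eq_square)
  then have "offdiag * offdiag * real (card V1) = 2 * ?m / (?c\<^sup>2 * ?R * y\<^sup>2)"
    by (simp only: card_V1_mult_r1)
  moreover have "offdiag * offdiag * ?n2 * real (card V1) = ?n2 * (offdiag * offdiag * real (card V1))"
    by (simp only: mult_ac)
  ultimately have Z: "offdiag * offdiag * ?n2 * real (card V1) = ?n2 * (2 * ?m / (?c\<^sup>2 * ?R * y\<^sup>2))"
    by simp
  have "y * ((y - 2 / (?c * y)) * ((?R - ?m) / ?R + y - ?n2 * ?m / (?c * ?R * y))
        - ?n2 * (2 * ?m / (?c\<^sup>2 * ?R * y\<^sup>2)))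
      = (y\<^sup>2 - 2 / ?c) * ((?R - ?m) / ?R + y) - ?n2 * ?m * y / (?c * ?R)"
    using c R y by (simp add: field_simps power2_eq_square)
  also have "\<dots> = (y + 1) * ((y + 1)\<^sup>2 - (2 + ?m / ?R) * (y + 1)
      + (2 * ?m / ?R + ?n2 * real r2 / (?c * ?R)))"
    unfolding n2 r2 using c R by (simp add: field_simps power2_eq_square)
  finally show ?thesis unfolding p K Z .
qed

lemma poly_char_poly_sej:
  assumes n1: "card V1 \<ge> 1" and n2: "card V2 \<ge> 1"
    and mu: "length mu = card V1" "mu ! 0 = 0" "char_poly (nlap_matrix V1 E1) = (\<Prod>a\<leftarrow>mu. [:- a, 1:])"
    and nu: "length nu = card V2" "nu ! 0 = 0" "char_poly (nlap_matrix V2 E2) = (\<Prod>a\<leftarrow>nu. [:- a, 1:])"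
  shows "poly (char_poly (nlap_matrix SV SE)) (y + 1) * y ^ card V1
    = (y + 1) * y ^ card E1
      * ((y + 1)\<^sup>2 - (2 + real (card E1) / deg_right) * (y + 1)
          + (2 * real (card E1) / deg_right + real (card V2) * real r2 / (deg_subdiv * deg_right)))
      * (\<Prod>i\<in>{1..<card V1}. y\<^sup>2 - (2 - mu ! i) / deg_subdiv)
      * (\<Prod>i\<in>{1..<card V2}. (y + 1) - (real (card E1) + real r2 * nu ! i) / deg_right)"
proof -
  let ?p = "scale1 * eval1" and ?Q = "scale2 * eval2" and ?K = "scale2 * eval2 - real (card V2) * corr"
    and ?Z = "offdiag * offdiag * real (card V2) * real (card V1)"
    and ?P1 = "\<Prod>i\<in>{1..<card V1}. y\<^sup>2 - (2 - mu ! i) / deg_subdiv"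
    and ?P2 = "\<Prod>i\<in>{1..<card V2}. (y + 1) - (real (card E1) + real r2 * nu ! i) / deg_right"
  have y: "y \<noteq> 0" using y_gt_1 by simp
  have "y ^ card V1 * (scale1 ^ card V1 * poly (char_poly (nlap_matrix V1 E1)) eval1)
      = (y * scale1) ^ card V1 * poly (\<Prod>a\<leftarrow>mu. [:- a, 1:]) eval1"
    by (simp add: mu(3) power_mult_distrib)
  also have "\<dots> = (y * scale1 * eval1) * (\<Prod>i\<in>{1..<card V1}. y * scale1 * (eval1 - mu ! i))"
    by (rule poly_prod_linear_scaled[OF mu(1) n1 mu(2)])
  also have "(\<Prod>i\<in>{1..<card V1}. y * scale1 * (eval1 - mu ! i)) = ?P1"
    using y deg_subdiv_pos
    by (intro prod.cong) (simp_all add: scale1_def eval1_def field_simps power2_eq_square)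
  finally have P1: "y ^ card V1 * (scale1 ^ card V1 * poly (char_poly (nlap_matrix V1 E1)) eval1)
      = y * ?p * ?P1" by simp
  have "scale2 ^ card V2 * poly (char_poly (nlap_matrix V2 E2)) eval2
      = ?Q * (\<Prod>i\<in>{1..<card V2}. scale2 * (eval2 - nu ! i))"
    unfolding nu(3) by (rule poly_prod_linear_scaled[OF nu(1) n2 nu(2)])
  also have "(\<Prod>i\<in>{1..<card V2}. scale2 * (eval2 - nu ! i)) = ?P2"
    using r2_pos deg_right_pos
    by (intro prod.cong) (simp_all add: scale2_def eval2_def field_simps, simp add: deg_right_def algebra_simps)
  finally have P2: "scale2 ^ card V2 * poly (char_poly (nlap_matrix V2 E2)) eval2 = ?Q * ?P2" .
  have factor: "p * q * (1 - c * n / q) * (1 - z / (p * (q - n * c))) = p * (q - n * c) - z"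
    if "q \<noteq> 0" "p * (q - n * c) \<noteq> 0" for p q c n z :: real
    using that by (simp add: field_simps)
  let ?S1 = "scale1 ^ card V1 * poly (char_poly (nlap_matrix V1 E1)) eval1"
    and ?S2 = "scale2 ^ card V2 * poly (char_poly (nlap_matrix V2 E2)) eval2"
    and ?A = "1 - corr * real (card V2) / ?Q" and ?B = "1 - ?Z / (?p * ?K)"
  have "poly (char_poly (nlap_matrix SV SE)) (y + 1) * y ^ card V1
      = y ^ card E1 * ((y ^ card V1 * ?S1) * ?S2 * ?A * ?B)"
    unfolding poly_char_poly_sej_eq_det_schur det_schur by (simp only: ac_simps)
  also have "\<dots> = y ^ card E1 * (y * (?p * ?Q * ?A * ?B)) * ?P1 * ?P2"
    unfolding P1 P2 by (simp only: ac_simps)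
  also have "?p * ?Q * ?A * ?B = ?p * ?K - ?Z"
    using scale1_eval1_pos scale2_eval2_pos scale2_eval2_corr_pos by (intro factor) auto
  finally show ?thesis unfolding sej_scalar_identity by (simp only: ac_simps)
qed

end

theorem theorem2p4:
  fixes V1 :: "'a set" and E1 :: "'a set set" and V2 :: "'b set" and E2 :: "'b set set"
    and r1 r2 n1 n2 m1 :: nat and mu nu :: "real list"
  assumes G1: "simple_graph V1 E1" and G2: "simple_graph V2 E2"
    and reg1: "regular V1 E1 r1" and r1: "r1 \<ge> 1"
    and reg2: "regular V2 E2 r2" and r2: "r2 \<ge> 1"
    and n1: "card V1 = n1" and n1_pos: "n1 \<ge> 1"
    and m1: "card E1 = m1"
    and n2: "card V2 = n2" and n2_pos: "n2 \<ge> 1"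
    and mu: "length mu = n1" "mu ! 0 = 0"
      "char_poly (nlap_matrix V1 E1) = (\<Prod>a\<leftarrow>mu. [:- a, 1:])"
    and nu: "length nu = n2" "nu ! 0 = 0"
      "char_poly (nlap_matrix V2 E2) = (\<Prod>a\<leftarrow>nu. [:- a, 1:])"
  shows "char_poly (nlap_matrix (sej_vertices V1 E1 V2) (sej_edges V1 E1 V2 E2)) * [:-1, 1:] ^ n1 =
      [:0, 1:] * [:-1, 1:] ^ m1
      * [: 2 * real m1 / (real r2 + real m1)
            + real n2 * real r2 / ((2 + real n2) * (real r2 + real m1)),
           - (2 + real m1 / (real r2 + real m1)), 1 :]
      * (\<Prod>i\<in>{1..<n1}. [: 1 - (2 - mu ! i) / (2 + real n2), -2, 1 :])
      * (\<Prod>i\<in>{1..<n2}. [: - ((real m1 + real r2 * nu ! i) / (real r2 + real m1)), 1 :])"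
  (is "?L = ?R")
proof (rule poly_eqI_Ioi)
  fix x :: real
  assume "x > 2"
  then interpret sej_eval V1 E1 V2 E2 r1 r2 "x - 1"
    using G1 G2 reg1 reg2 r1 r2 by unfold_locales auto
  show "poly ?L x = poly ?R x"
    using poly_char_poly_sej[OF _ _ mu[folded n1] nu[folded n2]] n1 n2 m1 n1_pos n2_pos
    by (simp add: poly_prod deg_subdiv_def deg_right_def algebra_simps power2_eq_square)
qed

end
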